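(* Let $A$ be a random variable with $\mathbb P(A>0)=1$, law $\rho$, and $\mathbb E\log A<0$, and let $\mu$ be a solution of equation (2) for $\rho$. Let $h:(0,\infty)\to[0,\infty)$ be the right-continuous non-increasing function determined by $$\int_0^\infty \mathbf 1_B(h(u))\,h(u)\,du=\rho(B)\quad\text{for every Borel }B\subset(0,\infty)$$ (equivalently, $\mathrm{Leb}\{u>0:h(u)\ge z\}=\int_{[z,\infty)}y^{-1}\rho(dy)$ for every $z>0$). Then $\int_0^\infty h(z)\,dz=1$, $\int_0^\infty h(z)\log h(z)\,dz<0$, and $\mu$ is a fixed point of the Poisson shot noise transform $\mathbb T_{h,1}$.
   Context: For a probability measure $\nu$ on $[0,\infty)$ with mean $m\in(0,\infty)$, its size-biased distribution is $\nu_{sb}(dx)=m^{-1}x\,\nu(dx)$. A probability measure $\mu$ on $[0,\infty)$ with mean in $(0,\infty)$ is a solution of equation (2) for $\rho$ if $\eta_{sb}\overset{d}{=}A\eta_{sb}+\eta$, where $\eta\sim\mu$, $\eta_{sb}\sim\mu_{sb}$ and $A\sim\rho$ are mutually independent. Poisson shot noise transform: fix $\lambda\in(0,\infty)$ and a Borel function $h:(0,\infty)\to[0,\infty)$. Let $\tau_1<\tau_2<\dots$ be the points of a homogeneous Poisson process on $(0,\infty)$ with intensity $\lambda$, independent of i.i.d. nonnegative random variables $\xi,\xi_1,\xi_2,\dots$. The domain is $\mathcal P_h^+=\{\nu:\nu\text{ a probability measure on }[0,\infty),\ \int_0^\infty\int_0^\infty(1\wedge h(s)y)\,ds\,\nu(dy)<\infty\}$;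 for $\mathcal L(\xi)\in\mathcal P_h^+$ the series $\sum_i\xi_ih(\tau_i)$ converges a.s., and $\mathbb T_{h,\lambda}(\mathcal L(\xi)):=\mathcal L(\sum_{i\ge1}\xi_ih(\tau_i))$. A fixed point of $\mathbb T_{h,\lambda}$ is a probability measure $\mu^*\in\mathcal P_h^+$, $\mu^*\neq\delta_0$, with $\mathbb T_{h,\lambda}\mu^*=\mu^*$; equivalently its Laplace–Stieltjes transform $\varphi(s)=\int_0^\infty e^{-sx}\mu^*(dx)$ satisfies $\varphi(s)=\exp\big(\lambda\int_0^\infty(\varphi(sh(u))-1)\,du\big)$ for all $s\ge0$. *)

theory Defs
  imports "HOL-Probability.Probability"
begin

definition prob_on_nonneg :: "real measure \<Rightarrow> bool" where
  "prob_on_nonneg \<nu> \<longleftrightarrow> prob_space \<nu> \<and> sets \<nu> = sets borel \<and> (AE x in \<nu>. 0 \<le> x)"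

definition has_pos_finite_mean :: "real measure \<Rightarrow> bool" where
  "has_pos_finite_mean \<nu> \<longleftrightarrow> integrable \<nu> (\<lambda>x. x) \<and> 0 < (\<integral>x. x \<partial>\<nu>)"

definition size_biased :: "real measure \<Rightarrow> real measure" where
  "size_biased \<nu> = density \<nu> (\<lambda>x. ennreal (x / (\<integral>y. y \<partial>\<nu>)))"

text \<open>mu solves equation (2) for rho: eta_sb =d A eta_sb + eta with A, eta_sb, eta independent
  (independence encoded by the product measure).\<close>
definition solves_eq2 :: "real measure \<Rightarrow> real measure \<Rightarrow> bool" where
  "solves_eq2 \<rho> \<mu> \<longleftrightarrow> prob_on_nonneg \<mu> \<and> has_pos_finite_mean \<mu> \<and>
     distr (\<rho> \<Otimes>\<^sub>M (size_biased \<mu> \<Otimes>\<^sub>M \<mu>)) borel (\<lambda>(a, y, x). a * y + x)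
       = size_biased \<mu>"

definition laplace_st :: "real measure \<Rightarrow> real \<Rightarrow> real" where
  "laplace_st \<nu> s = (\<integral>x. exp (- s * x) \<partial>\<nu>)"

definition in_Ph_plus :: "(real \<Rightarrow> real) \<Rightarrow> real measure \<Rightarrow> bool" where
  "in_Ph_plus h \<nu> \<longleftrightarrow> prob_on_nonneg \<nu> \<and>
     (\<integral>\<^sup>+ y. (\<integral>\<^sup>+ s. ennreal (min 1 (h s * y)) * indicator {0<..} s \<partial>lborel) \<partial>\<nu>) < \<infinity>"

text \<open>Fixed point of T_{h,lambda}, via the Laplace--Stieltjes characterization
  phi(s) = exp(lambda * int_0^infty (phi(s h(u)) - 1) du) for all s >= 0.\<close>
definition shot_noise_fixed_point :: "(real \<Rightarrow> real) \<Rightarrow> real \<Rightarrow> real measure \<Rightarrow> bool" where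
  "shot_noise_fixed_point h lam \<mu> \<longleftrightarrow> in_Ph_plus h \<mu> \<and> \<mu> \<noteq> return borel 0 \<and>
     (\<forall>s\<ge>0. set_integrable lborel {0<..} (\<lambda>u. laplace_st \<mu> (s * h u) - 1) \<and>
        laplace_st \<mu> s = exp (lam * (\<integral>u\<in>{0<..}. (laplace_st \<mu> (s * h u) - 1) \<partial>lborel)))"

end

theory Submission
  imports Defs
begin

text \<open>
  Let \<phi> be the Laplace transform of \<mu>, m its mean and \<psi>(s) = \<integral> x e^(-s x) \<mu>(dx) = -\<phi>'(s).
  The defining identity of h says that \<rho> is the image of the measure h(u) du on (0,\<infinity>)
  under h, so \<integral> f(h(u)) h(u) du = \<integral> f d\<rho> for every f \<ge> 0; taking for f the constant 1
  and the positive and negative parts of ln gives the first two claims. The size-biased law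
  has Laplace transform \<psi>/m, so equation (2) says \<psi>(t) = \<phi>(t) E \<psi>(t A). Since
  (1 - \<phi>(s a))/a = \<integral>[0,s] \<psi>(t a) dt, Fubini's theorem gives
    \<integral>[0,\<infinity>) (1 - \<phi>(s h(u))) du = E (1 - \<phi>(s A))/A = \<integral>[0,s] \<psi>(t)/\<phi>(t) dt = - ln \<phi>(s),
  which is the fixed point equation of the shot noise transform with \<lambda> = 1. The same change
  of variables bounds the integral defining the domain of that transform by the mean of \<mu>.
\<close>

lemma borel_measurable_antimono_on:
  fixes f :: "real \<Rightarrow> real"
  assumes "antimono_on A f"
  shows "f \<in> borel_measurable (restrict_space borel A)"
proof -
  have "mono_on A (\<lambda>x. - f x)"
    using assms by (auto simp: monotone_on_def)
  then have "(\<lambda>x. - (- f x)) \<in> borel_measurable (restrict_space borel A)"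
    by (intro borel_measurable_uminus borel_measurable_mono_on_fnc)
  then show ?thesis
    by simp
qed

lemma nn_integral_mult_exp_neg:
  fixes c x s :: real
  assumes c: "0 < c" and x: "0 \<le> x" and s: "0 \<le> s"
  shows "(\<integral>\<^sup>+t\<in>{0..s}. ennreal (x * exp (- (t * c) * x)) \<partial>lborel)
    = ennreal ((1 - exp (- (s * c) * x)) / c)"
proof -
  let ?F = "\<lambda>t. - exp (- (t * c) * x) / c"
  have "((\<lambda>t. x * exp (- (t * c) * x)) has_integral (?F s - ?F 0)) {0..s}"
  proof (rule fundamental_theorem_of_calculus[OF s])
    fix t :: real
    have "(?F has_real_derivative x * exp (- (t * c) * x)) (at t)"
      using c by (auto intro!: derivative_eq_intros simp: field_simps)
    then show "(?F has_vector_derivative x * exp (- (t * c) * x)) (at t within {0..s})"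
      by (simp add: has_real_derivative_iff_has_vector_derivative has_vector_derivative_at_within)
  qed
  then have "(\<integral>\<^sup>+t\<in>{0..s}. ennreal (x * exp (- (t * c) * x)) \<partial>lborel) = ennreal (?F s - ?F 0)"
    by (rule nn_integral_has_integral_lebesgue'[rotated]) (use x in auto)
  also have "?F s - ?F 0 = (1 - exp (- (s * c) * x)) / c"
    by (simp add: diff_divide_distrib)
  finally show ?thesis .
qed

locale weighted_pushforward =
  fixes \<rho> :: "real measure" and h :: "real \<Rightarrow> real"
  assumes sets_rho [measurable_cong]: "sets \<rho> = sets borel"
    and rho_pos: "AE a in \<rho>. 0 < a"
    and h_measurable [measurable]: "h \<in> borel_measurable (restrict_space borel {0<..})"
    and h_nonneg: "\<And>u. 0 < u \<Longrightarrow> 0 \<le> h u"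
    and h_rho: "\<And>B. B \<in> sets borel \<Longrightarrow> B \<subseteq> {0<..} \<Longrightarrow>
        (\<integral>\<^sup>+u\<in>{0<..}. ennreal (indicator B (h u) * h u) \<partial>lborel) = emeasure \<rho> B"
begin

lemma distr_density_h_eq_rho:
  "distr (density (restrict_space lborel {0<..}) h) borel h = \<rho>"
proof (rule measure_eqI)
  fix X assume "X \<in> sets (distr (density (restrict_space lborel {0<..}) h) borel h)"
  then have X [measurable]: "X \<in> sets borel"
    by simp
  have "emeasure (distr (density (restrict_space lborel {0<..}) h) borel h) X
      = (\<integral>\<^sup>+u\<in>{0<..}. ennreal (h u) * indicator X (h u) \<partial>lborel)"
    by (simp flip: nn_integral_indicator
        add: nn_integral_distr nn_integral_density nn_integral_restrict_space)
  also have "\<dots> = (\<integral>\<^sup>+u\<in>{0<..}. ennreal (indicator (X \<inter> {0<..}) (h u) * h u) \<partial>lborel)"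
  proof (rule nn_integral_cong)
    fix u :: real
    show "ennreal (h u) * indicator X (h u) * indicator {0<..} u
        = ennreal (indicator (X \<inter> {0<..}) (h u) * h u) * indicator {0<..} u"
      using h_nonneg[of u] by (cases "h u = 0") (auto simp: indicator_def)
  qed
  also have "\<dots> = emeasure \<rho> (X \<inter> {0<..})"
    by (intro h_rho) auto
  also have "\<dots> = emeasure \<rho> X"
    by (rule emeasure_eq_AE) (use rho_pos in auto)
  finally show "emeasure (distr (density (restrict_space lborel {0<..}) h) borel h) X
      = emeasure \<rho> X" .
qed (simp add: sets_rho)

lemma nn_integral_comp_h:
  assumes [measurable]: "f \<in> borel_measurable borel"
  shows "(\<integral>\<^sup>+u\<in>{0<..}. f (h u) * ennreal (h u) \<partial>lborel) = (\<integral>\<^sup>+a. f a \<partial>\<rho>)"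
proof -
  have "(\<integral>\<^sup>+a. f a \<partial>\<rho>) = (\<integral>\<^sup>+a. f a \<partial>distr (density (restrict_space lborel {0<..}) h) borel h)"
    by (simp add: distr_density_h_eq_rho)
  also have "\<dots> = (\<integral>\<^sup>+u\<in>{0<..}. ennreal (h u) * f (h u) \<partial>lborel)"
    by (simp add: nn_integral_distr nn_integral_density nn_integral_restrict_space)
  finally show ?thesis
    by (simp add: mult.commute)
qed

lemma borel_measurable_indicator_comp_h:
  fixes f :: "real \<Rightarrow> real"
  assumes "f \<in> borel_measurable borel"
  shows "(\<lambda>u. indicator {0<..} u *\<^sub>R f (h u)) \<in> borel_measurable borel"
  using measurable_compose[OF h_measurable assms] by (simp add: borel_measurable_restrict_space_iff)

lemma nn_integral_h:
  "(\<integral>\<^sup>+u\<in>{0<..}. ennreal (h u) \<partial>lborel) = emeasure \<rho> (space \<rho>)"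
  using nn_integral_comp_h[of "\<lambda>_. 1"] by simp

lemma nn_integral_h_mult_comp:
  assumes [measurable]: "g \<in> borel_measurable borel"
  shows "(\<integral>\<^sup>+u\<in>{0<..}. ennreal (h u * g (h u)) \<partial>lborel) = (\<integral>\<^sup>+a. ennreal (g a) \<partial>\<rho>)"
proof -
  have "(\<integral>\<^sup>+u\<in>{0<..}. ennreal (h u * g (h u)) \<partial>lborel)
      = (\<integral>\<^sup>+u\<in>{0<..}. ennreal (g (h u)) * ennreal (h u) \<partial>lborel)"
    by (intro nn_integral_cong) (auto simp: indicator_def h_nonneg ennreal_mult' mult.commute)
  also have "\<dots> = (\<integral>\<^sup>+a. ennreal (g a) \<partial>\<rho>)"
    by (rule nn_integral_comp_h) measurable
  finally show ?thesis .
qed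

lemma nn_integral_min_h_le:
  assumes "0 \<le> y"
  shows "(\<integral>\<^sup>+u\<in>{0<..}. ennreal (min 1 (h u * y)) \<partial>lborel) \<le> ennreal y * emeasure \<rho> (space \<rho>)"
proof -
  have "min 1 (c * y) = c * min (1 / c) y" if "0 \<le> c" for c :: real
    using that \<open>0 \<le> y\<close> by (cases "c = 0") (auto simp: min_def field_simps)
  then have "(\<integral>\<^sup>+u\<in>{0<..}. ennreal (min 1 (h u * y)) \<partial>lborel)
      = (\<integral>\<^sup>+u\<in>{0<..}. ennreal (h u * min (1 / h u) y) \<partial>lborel)"
    by (intro nn_integral_cong) (auto simp: indicator_def h_nonneg)
  also have "\<dots> = (\<integral>\<^sup>+a. ennreal (min (1 / a) y) \<partial>\<rho>)"
    by (rule nn_integral_h_mult_comp) measurable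
  also have "\<dots> \<le> (\<integral>\<^sup>+a. ennreal y \<partial>\<rho>)"
    by (intro nn_integral_mono) (simp add: ennreal_leI)
  finally show ?thesis
    by (simp add: mult.commute)
qed

end

definition tilted_mean :: "real measure \<Rightarrow> real \<Rightarrow> real" where
  "tilted_mean \<mu> s = (\<integral>x. x * exp (- s * x) \<partial>\<mu>)"

locale nonneg_law_finite_mean =
  fixes \<mu> :: "real measure"
  assumes law: "prob_on_nonneg \<mu>" and integrable_id: "integrable \<mu> (\<lambda>x. x)"
begin

sublocale P: prob_space \<mu>
  using law by (simp add: prob_on_nonneg_def)

lemma sets_mu [measurable_cong]: "sets \<mu> = sets borel"
  using law by (simp add: prob_on_nonneg_def)

lemma AE_nonneg: "AE x in \<mu>. 0 \<le> x"
  using law by (simp add: prob_on_nonneg_def)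

lemma integrable_exp:
  assumes "0 \<le> s"
  shows "integrable \<mu> (\<lambda>x. exp (- s * x))"
proof (rule Bochner_Integration.integrable_bound)
  show "integrable \<mu> (\<lambda>_. 1::real)"
    by simp
  show "AE x in \<mu>. norm (exp (- s * x)) \<le> norm (1::real)"
    using AE_nonneg by eventually_elim (use assms in simp)
qed measurable

lemma integrable_tilted:
  assumes "0 \<le> s"
  shows "integrable \<mu> (\<lambda>x. x * exp (- s * x))"
proof (rule Bochner_Integration.integrable_bound[OF integrable_id])
  show "AE x in \<mu>. norm (x * exp (- s * x)) \<le> norm x"
    using AE_nonneg by eventually_elim (use assms in \<open>simp add: abs_mult mult_left_le\<close>)
qed measurable

lemma laplace_st_0: "laplace_st \<mu> 0 = 1"
  by (simp add: laplace_st_def P.prob_space)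

lemma laplace_st_le_1:
  assumes "0 \<le> s"
  shows "laplace_st \<mu> s \<le> 1"
proof -
  have "laplace_st \<mu> s \<le> (\<integral>x. 1 \<partial>\<mu>)"
    unfolding laplace_st_def
  proof (rule integral_mono_AE[OF integrable_exp[OF assms]])
    show "AE x in \<mu>. exp (- s * x) \<le> 1"
      using AE_nonneg by eventually_elim (use assms in simp)
  qed simp
  then show ?thesis
    by (simp add: P.prob_space)
qed

lemma laplace_st_pos:
  assumes "0 \<le> s"
  shows "0 < laplace_st \<mu> s"
proof -
  have "0 \<le> laplace_st \<mu> s"
    unfolding laplace_st_def by (rule integral_nonneg_AE) simp
  moreover have "laplace_st \<mu> s \<noteq> 0"
    using integral_nonneg_eq_0_iff_AE[OF integrable_exp[OF assms]] by (simp add: laplace_st_def)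
  ultimately show ?thesis
    by simp
qed

lemma nn_integral_exp: "0 \<le> s \<Longrightarrow> (\<integral>\<^sup>+x. ennreal (exp (- s * x)) \<partial>\<mu>) = ennreal (laplace_st \<mu> s)"
  unfolding laplace_st_def by (rule nn_integral_eq_integral[OF integrable_exp]) auto

lemma tilted_mean_nonneg: "0 \<le> tilted_mean \<mu> s"
  unfolding tilted_mean_def
  by (rule integral_nonneg_AE) (use AE_nonneg in \<open>eventually_elim, simp\<close>)

lemma nn_integral_tilted:
  assumes "0 \<le> s"
  shows "(\<integral>\<^sup>+x. ennreal (x * exp (- s * x)) \<partial>\<mu>) = ennreal (tilted_mean \<mu> s)"
  unfolding tilted_mean_def
  by (rule nn_integral_eq_integral[OF integrable_tilted[OF assms]])
    (use AE_nonneg in \<open>eventually_elim, simp\<close>)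

lemma borel_measurable_laplace_st [measurable]: "laplace_st \<mu> \<in> borel_measurable borel"
  unfolding laplace_st_def[abs_def] by (rule P.borel_measurable_lebesgue_integral) simp

lemma borel_measurable_tilted_mean [measurable]: "tilted_mean \<mu> \<in> borel_measurable borel"
  unfolding tilted_mean_def[abs_def] by (rule P.borel_measurable_lebesgue_integral) simp

lemma continuous_on_tilted_mean: "continuous_on {0..} (tilted_mean \<mu>)"
proof (rule continuous_on_sequentiallyI)
  fix u :: "nat \<Rightarrow> real" and s
  assume u: "\<forall>n. u n \<in> {0..}" and "u \<longlonglongrightarrow> s"
  show "(\<lambda>n. tilted_mean \<mu> (u n)) \<longlonglongrightarrow> tilted_mean \<mu> s"
    unfolding tilted_mean_def
  proof (rule integral_dominated_convergence[where w="\<lambda>x. x"])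
    show "AE x in \<mu>. (\<lambda>n. x * exp (- u n * x)) \<longlonglongrightarrow> x * exp (- s * x)"
      by (intro AE_I2 tendsto_intros \<open>u \<longlonglongrightarrow> s\<close>)
    show "AE x in \<mu>. norm (x * exp (- u n * x)) \<le> x" for n
      using AE_nonneg by eventually_elim (use u in \<open>simp add: abs_mult mult_left_le\<close>)
  qed (simp_all add: integrable_id)
qed

lemma one_minus_laplace_st_div_eq:
  assumes c: "0 < c" and s: "0 \<le> s"
  shows "ennreal ((1 - laplace_st \<mu> (s * c)) / c)
    = (\<integral>\<^sup>+t\<in>{0..s}. ennreal (tilted_mean \<mu> (t * c)) \<partial>lborel)"
proof -
  interpret pair_sigma_finite \<mu> lborel ..
  have "(\<integral>\<^sup>+t\<in>{0..s}. ennreal (tilted_mean \<mu> (t * c)) \<partial>lborel)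
      = (\<integral>\<^sup>+t. (\<integral>\<^sup>+x. ennreal (x * exp (- (t * c) * x)) * indicator {0..s} t \<partial>\<mu>) \<partial>lborel)"
  proof (intro nn_integral_cong)
    fix t :: real
    show "ennreal (tilted_mean \<mu> (t * c)) * indicator {0..s} t
        = (\<integral>\<^sup>+x. ennreal (x * exp (- (t * c) * x)) * indicator {0..s} t \<partial>\<mu>)"
      using c nn_integral_tilted[of "t * c"]
      by (cases "t \<in> {0..s}") (simp_all add: nn_integral_multc)
  qed
  also have "\<dots> = (\<integral>\<^sup>+x. (\<integral>\<^sup>+t\<in>{0..s}. ennreal (x * exp (- (t * c) * x)) \<partial>lborel) \<partial>\<mu>)"
    by (rule Fubini') measurable
  also have "\<dots> = (\<integral>\<^sup>+x. ennreal ((1 - exp (- (s * c) * x)) / c) \<partial>\<mu>)"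
  proof (rule nn_integral_cong_AE)
    show "AE x in \<mu>. (\<integral>\<^sup>+t\<in>{0..s}. ennreal (x * exp (- (t * c) * x)) \<partial>lborel)
        = ennreal ((1 - exp (- (s * c) * x)) / c)"
      using AE_nonneg by eventually_elim (rule nn_integral_mult_exp_neg[OF c _ s])
  qed
  also have "\<dots> = ennreal ((1 - laplace_st \<mu> (s * c)) / c)"
  proof (rule nn_integral_eq_integral[THEN trans])
    show "integrable \<mu> (\<lambda>x. (1 - exp (- (s * c) * x)) / c)"
      using c s
      by (intro integrable_divide_zero Bochner_Integration.integrable_diff integrable_exp) simp_all
    show "AE x in \<mu>. 0 \<le> (1 - exp (- (s * c) * x)) / c"
      using AE_nonneg by eventually_elim (use c s in simp)
    show "ennreal (\<integral>x. (1 - exp (- (s * c) * x)) / c \<partial>\<mu>) = ennreal ((1 - laplace_st \<mu> (s * c)) / c)"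
      using c s integrable_exp[of "s * c"] by (simp add: laplace_st_def P.prob_space)
  qed
  finally show ?thesis ..
qed

lemma laplace_st_eq_1_minus_integral:
  assumes t: "0 \<le> t"
  shows "laplace_st \<mu> t = 1 - integral {0..t} (tilted_mean \<mu>)"
proof -
  have cont: "continuous_on {0..t} (tilted_mean \<mu>)"
    by (rule continuous_on_subset[OF continuous_on_tilted_mean]) auto
  have "ennreal (1 - laplace_st \<mu> t) = (\<integral>\<^sup>+\<tau>\<in>{0..t}. ennreal (tilted_mean \<mu> \<tau>) \<partial>lborel)"
    using one_minus_laplace_st_div_eq[of 1 t] t by simp
  also have "\<dots> = ennreal (integral {0..t} (tilted_mean \<mu>))"
    by (intro nn_integral_has_integral_lebesgue' tilted_mean_nonneg
        integrable_integral integrable_continuous_real cont)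
  finally show ?thesis
    using laplace_st_le_1[OF t]
      integral_nonneg[OF integrable_continuous_real[OF cont] tilted_mean_nonneg]
    by simp
qed

lemma has_real_derivative_laplace_st:
  assumes s: "0 \<le> s" and t: "t \<in> {0..s}"
  shows "(laplace_st \<mu> has_real_derivative - tilted_mean \<mu> t) (at t within {0..s})"
proof -
  have "continuous_on {0..s} (tilted_mean \<mu>)"
    by (rule continuous_on_subset[OF continuous_on_tilted_mean]) auto
  then have "((\<lambda>u. integral {0..u} (tilted_mean \<mu>)) has_real_derivative tilted_mean \<mu> t)
      (at t within {0..s})"
    using t
    by (simp add: has_real_derivative_iff_has_vector_derivative integral_has_vector_derivative)
  then have "((\<lambda>u. 1 - integral {0..u} (tilted_mean \<mu>)) has_real_derivative - tilted_mean \<mu> t)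
      (at t within {0..s})"
    by (auto intro!: derivative_eq_intros)
  then show ?thesis
    by (rule has_field_derivative_transform_within[where d=1])
      (use t in \<open>auto simp: laplace_st_eq_1_minus_integral\<close>)
qed

lemma nn_integral_tilted_mean_div_laplace_st:
  assumes s: "0 \<le> s"
  shows "(\<integral>\<^sup>+t\<in>{0..s}. ennreal (tilted_mean \<mu> t / laplace_st \<mu> t) \<partial>lborel)
    = ennreal (- ln (laplace_st \<mu> s))"
proof -
  let ?F = "\<lambda>t. - ln (laplace_st \<mu> t)"
  have "((\<lambda>t. tilted_mean \<mu> t / laplace_st \<mu> t) has_integral (?F s - ?F 0)) {0..s}"
  proof (rule fundamental_theorem_of_calculus[OF s])
    fix t assume t: "t \<in> {0..s}"
    then have "laplace_st \<mu> t > 0"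
      by (auto intro: laplace_st_pos)
    then have "(?F has_real_derivative tilted_mean \<mu> t / laplace_st \<mu> t) (at t within {0..s})"
      by (auto intro!: derivative_eq_intros has_real_derivative_laplace_st[OF s t]
          simp: field_simps)
    then show "(?F has_vector_derivative tilted_mean \<mu> t / laplace_st \<mu> t) (at t within {0..s})"
      by (simp add: has_real_derivative_iff_has_vector_derivative)
  qed
  then show ?thesis
    by (subst nn_integral_has_integral_lebesgue')
      (auto intro!: divide_nonneg_nonneg tilted_mean_nonneg less_imp_le[OF laplace_st_pos]
        simp: laplace_st_0)
qed

lemma nn_integral_exp_size_biased:
  assumes c: "0 \<le> c"
  shows "(\<integral>\<^sup>+y. ennreal (exp (- c * y)) \<partial>size_biased \<mu>) = ennreal (tilted_mean \<mu> c / (\<integral>x. x \<partial>\<mu>))"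
proof -
  define m where "m = (\<integral>x. x \<partial>\<mu>)"
  have m: "0 \<le> m"
    unfolding m_def by (rule integral_nonneg_AE[OF AE_nonneg])
  have "(\<integral>\<^sup>+y. ennreal (exp (- c * y)) \<partial>size_biased \<mu>) = (\<integral>\<^sup>+y. ennreal (y * exp (- c * y) / m) \<partial>\<mu>)"
    unfolding size_biased_def m_def[symmetric]
    by (subst nn_integral_density) (auto intro!: nn_integral_cong simp flip: ennreal_mult'')
  also have "\<dots> = ennreal (\<integral>y. y * exp (- c * y) / m \<partial>\<mu>)"
  proof (rule nn_integral_eq_integral)
    show "integrable \<mu> (\<lambda>y. y * exp (- c * y) / m)"
      using integrable_tilted[OF c] by simp
    show "AE y in \<mu>. 0 \<le> y * exp (- c * y) / m"
      using AE_nonneg by eventually_elim (use m in simp)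
  qed
  also have "\<dots> = ennreal (tilted_mean \<mu> c / m)"
    by (simp add: tilted_mean_def)
  finally show ?thesis
    unfolding m_def .
qed

lemma sets_size_biased [measurable_cong]: "sets (size_biased \<mu>) = sets borel"
  by (simp add: size_biased_def sets_mu)

lemma prob_space_size_biased:
  assumes "0 < (\<integral>x. x \<partial>\<mu>)"
  shows "prob_space (size_biased \<mu>)"
proof
  have "emeasure (size_biased \<mu>) (space (size_biased \<mu>))
      = (\<integral>\<^sup>+y. ennreal (exp (- 0 * y)) \<partial>size_biased \<mu>)"
    by simp
  also have "\<dots> = 1"
    using assms by (subst nn_integral_exp_size_biased) (simp_all add: tilted_mean_def)
  finally show "emeasure (size_biased \<mu>) (space (size_biased \<mu>)) = 1" .
qed

lemma nn_integral_exp_affine_size_biased: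
  assumes t: "0 \<le> t" and a: "0 \<le> a"
  shows "(\<integral>\<^sup>+y. (\<integral>\<^sup>+x. ennreal (exp (- t * (a * y + x))) \<partial>\<mu>) \<partial>size_biased \<mu>)
    = ennreal (tilted_mean \<mu> (t * a) / (\<integral>x. x \<partial>\<mu>)) * ennreal (laplace_st \<mu> t)"
proof -
  have "(\<integral>\<^sup>+x. ennreal (exp (- t * (a * y + x))) \<partial>\<mu>)
      = (\<integral>\<^sup>+x. ennreal (exp (- (t * a) * y)) * ennreal (exp (- t * x)) \<partial>\<mu>)" for y
    by (intro nn_integral_cong) (simp add: ennreal_mult[symmetric] exp_add[symmetric] algebra_simps)
  then have "(\<integral>\<^sup>+y. (\<integral>\<^sup>+x. ennreal (exp (- t * (a * y + x))) \<partial>\<mu>) \<partial>size_biased \<mu>)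
      = (\<integral>\<^sup>+y. ennreal (exp (- (t * a) * y)) * ennreal (laplace_st \<mu> t) \<partial>size_biased \<mu>)"
    using nn_integral_exp[OF t] by (simp add: nn_integral_cmult)
  also have "\<dots> = ennreal (tilted_mean \<mu> (t * a) / (\<integral>x. x \<partial>\<mu>)) * ennreal (laplace_st \<mu> t)"
    using t a nn_integral_exp_size_biased[of "t * a"] by (simp add: nn_integral_multc)
  finally show ?thesis .
qed

end

locale eq2_solution =
  fixes \<rho> \<mu> :: "real measure"
  assumes rho_prob: "prob_space \<rho>" and sets_rho [measurable_cong]: "sets \<rho> = sets borel"
    and rho_pos: "AE a in \<rho>. 0 < a" and solution: "solves_eq2 \<rho> \<mu>"
begin

sublocale nonneg_law_finite_mean \<mu>
  using solution by (simp add: nonneg_law_finite_mean_def solves_eq2_def has_pos_finite_mean_def)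

sublocale R: prob_space \<rho>
  by (rule rho_prob)

lemma mean_pos: "0 < (\<integral>x. x \<partial>\<mu>)"
  using solution by (simp add: solves_eq2_def has_pos_finite_mean_def)

lemma tilted_mean_eq2:
  assumes t: "0 \<le> t"
  shows "ennreal (tilted_mean \<mu> t / (\<integral>x. x \<partial>\<mu>))
    = ennreal (laplace_st \<mu> t / (\<integral>x. x \<partial>\<mu>)) * (\<integral>\<^sup>+a. ennreal (tilted_mean \<mu> (t * a)) \<partial>\<rho>)"
proof -
  define m where "m = (\<integral>x. x \<partial>\<mu>)"
  interpret SB: prob_space "size_biased \<mu>"
    by (rule prob_space_size_biased[OF mean_pos])
  interpret SB_P: pair_prob_space "size_biased \<mu>" \<mu> ..
  have "ennreal (tilted_mean \<mu> t / m) = (\<integral>\<^sup>+z. ennreal (exp (- t * z)) \<partial>size_biased \<mu>)"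
    using nn_integral_exp_size_biased[OF t] by (simp add: m_def)
  also have "\<dots> = (\<integral>\<^sup>+z. ennreal (exp (- t * z))
      \<partial>distr (\<rho> \<Otimes>\<^sub>M (size_biased \<mu> \<Otimes>\<^sub>M \<mu>)) borel (\<lambda>(a, y, x). a * y + x))"
    using solution by (simp add: solves_eq2_def)
  also have "\<dots> = (\<integral>\<^sup>+w. ennreal (exp (- t * (case w of (a, y, x) \<Rightarrow> a * y + x)))
      \<partial>(\<rho> \<Otimes>\<^sub>M (size_biased \<mu> \<Otimes>\<^sub>M \<mu>)))"
    by (rule nn_integral_distr) simp_all
  also have "\<dots> = (\<integral>\<^sup>+a. (\<integral>\<^sup>+w. ennreal (exp (- t * (a * fst w + snd w)))
      \<partial>(size_biased \<mu> \<Otimes>\<^sub>M \<mu>)) \<partial>\<rho>)"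
    by (subst SB_P.P.nn_integral_fst[symmetric]) (simp_all add: case_prod_beta)
  also have "\<dots> = (\<integral>\<^sup>+a. (\<integral>\<^sup>+y. (\<integral>\<^sup>+x. ennreal (exp (- t * (a * y + x))) \<partial>\<mu>) \<partial>size_biased \<mu>) \<partial>\<rho>)"
    by (intro nn_integral_cong) (subst P.nn_integral_fst[symmetric], simp_all)
  also have "\<dots> = (\<integral>\<^sup>+a. ennreal (tilted_mean \<mu> (t * a) / m) * ennreal (laplace_st \<mu> t) \<partial>\<rho>)"
  proof (rule nn_integral_cong_AE)
    show "AE a in \<rho>. (\<integral>\<^sup>+y. (\<integral>\<^sup>+x. ennreal (exp (- t * (a * y + x))) \<partial>\<mu>) \<partial>size_biased \<mu>)
        = ennreal (tilted_mean \<mu> (t * a) / m) * ennreal (laplace_st \<mu> t)"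
      using rho_pos
      by eventually_elim (unfold m_def, rule nn_integral_exp_affine_size_biased[OF t], simp)
  qed
  also have "\<dots> = ennreal (laplace_st \<mu> t / m) * (\<integral>\<^sup>+a. ennreal (tilted_mean \<mu> (t * a)) \<partial>\<rho>)"
  proof -
    have "ennreal (tilted_mean \<mu> (t * a) / m) * ennreal (laplace_st \<mu> t)
        = ennreal (laplace_st \<mu> t / m) * ennreal (tilted_mean \<mu> (t * a))" for a
      using mean_pos tilted_mean_nonneg[of "t * a"] laplace_st_pos[OF t]
      by (simp add: m_def ennreal_mult[symmetric])
    then show ?thesis
      by (simp add: nn_integral_cmult)
  qed
  finally show ?thesis
    unfolding m_def .
qed

lemma tilted_mean_div_laplace_st:
  assumes t: "0 \<le> t"
  shows "ennreal (tilted_mean \<mu> t / laplace_st \<mu> t) = (\<integral>\<^sup>+a. ennreal (tilted_mean \<mu> (t * a)) \<partial>\<rho>)"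
proof -
  define m where "m = (\<integral>x. x \<partial>\<mu>)"
  define I where "I = (\<integral>\<^sup>+a. ennreal (tilted_mean \<mu> (t * a)) \<partial>\<rho>)"
  have pos: "0 < laplace_st \<mu> t / m"
    using laplace_st_pos[OF t] mean_pos by (simp add: m_def)
  have "I = I * ennreal (laplace_st \<mu> t / m) / ennreal (laplace_st \<mu> t / m)"
    by (rule ennreal_mult_divide_eq[symmetric]) (use pos in \<open>simp_all add: ennreal_eq_0_iff\<close>)
  also have "\<dots> = ennreal (tilted_mean \<mu> t / m) / ennreal (laplace_st \<mu> t / m)"
    using tilted_mean_eq2[OF t] by (simp add: I_def m_def mult.commute)
  also have "\<dots> = ennreal (tilted_mean \<mu> t / laplace_st \<mu> t)"
    using pos mean_pos tilted_mean_nonneg[of t] by (simp add: divide_ennreal m_def)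
  finally show ?thesis
    unfolding I_def ..
qed

lemma nn_integral_one_minus_laplace_st_div:
  assumes s: "0 \<le> s"
  shows "(\<integral>\<^sup>+a. ennreal ((1 - laplace_st \<mu> (s * a)) / a) \<partial>\<rho>) = ennreal (- ln (laplace_st \<mu> s))"
proof -
  interpret pair_sigma_finite lborel \<rho> ..
  have "(\<integral>\<^sup>+a. ennreal ((1 - laplace_st \<mu> (s * a)) / a) \<partial>\<rho>)
      = (\<integral>\<^sup>+a. (\<integral>\<^sup>+t. ennreal (tilted_mean \<mu> (t * a)) * indicator {0..s} t \<partial>lborel) \<partial>\<rho>)"
  proof (rule nn_integral_cong_AE)
    show "AE a in \<rho>. ennreal ((1 - laplace_st \<mu> (s * a)) / a)
        = (\<integral>\<^sup>+t. ennreal (tilted_mean \<mu> (t * a)) * indicator {0..s} t \<partial>lborel)"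
      using rho_pos by eventually_elim (rule one_minus_laplace_st_div_eq[OF _ s])
  qed
  also have "\<dots> = (\<integral>\<^sup>+t. (\<integral>\<^sup>+a. ennreal (tilted_mean \<mu> (t * a)) * indicator {0..s} t \<partial>\<rho>) \<partial>lborel)"
    by (rule Fubini') measurable
  also have "\<dots> = (\<integral>\<^sup>+t\<in>{0..s}. ennreal (tilted_mean \<mu> t / laplace_st \<mu> t) \<partial>lborel)"
    by (intro nn_integral_cong)
      (auto simp: nn_integral_multc tilted_mean_div_laplace_st indicator_def)
  also have "\<dots> = ennreal (- ln (laplace_st \<mu> s))"
    by (rule nn_integral_tilted_mean_div_laplace_st[OF s])
  finally show ?thesis .
qed

end

locale shot_noise_setting =
  W: weighted_pushforward \<rho> h + E: eq2_solution \<rho> \<mu>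
  for \<rho> \<mu> :: "real measure" and h :: "real \<Rightarrow> real"
begin

lemma in_Ph_plus: "in_Ph_plus h \<mu>"
proof -
  have "(\<integral>\<^sup>+y. (\<integral>\<^sup>+u\<in>{0<..}. ennreal (min 1 (h u * y)) \<partial>lborel) \<partial>\<mu>) \<le> (\<integral>\<^sup>+y. ennreal y \<partial>\<mu>)"
  proof (rule nn_integral_mono_AE)
    show "AE y in \<mu>. (\<integral>\<^sup>+u\<in>{0<..}. ennreal (min 1 (h u * y)) \<partial>lborel) \<le> ennreal y"
      using E.AE_nonneg
      by eventually_elim (use W.nn_integral_min_h_le in \<open>simp add: E.R.emeasure_space_1\<close>)
  qed
  also have "\<dots> = ennreal (\<integral>y. y \<partial>\<mu>)"
    by (rule nn_integral_eq_integral[OF E.integrable_id E.AE_nonneg])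
  finally show ?thesis
    using E.law by (simp add: in_Ph_plus_def le_less_trans)
qed

lemma nn_integral_one_minus_laplace_st_comp_h:
  assumes s: "0 \<le> s"
  shows "(\<integral>\<^sup>+u\<in>{0<..}. ennreal (1 - laplace_st \<mu> (s * h u)) \<partial>lborel)
    = ennreal (- ln (laplace_st \<mu> s))"
proof -
  have "1 - laplace_st \<mu> (s * c) = c * ((1 - laplace_st \<mu> (s * c)) / c)" if "0 \<le> c" for c
    using that by (cases "c = 0") (simp_all add: E.laplace_st_0)
  then have "(\<integral>\<^sup>+u\<in>{0<..}. ennreal (1 - laplace_st \<mu> (s * h u)) \<partial>lborel)
      = (\<integral>\<^sup>+u\<in>{0<..}. ennreal (h u * ((1 - laplace_st \<mu> (s * h u)) / h u)) \<partial>lborel)"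
    by (intro nn_integral_cong) (auto simp: indicator_def W.h_nonneg E.laplace_st_0)
  also have "\<dots> = (\<integral>\<^sup>+a. ennreal ((1 - laplace_st \<mu> (s * a)) / a) \<partial>\<rho>)"
    by (rule W.nn_integral_h_mult_comp) measurable
  also have "\<dots> = ennreal (- ln (laplace_st \<mu> s))"
    by (rule E.nn_integral_one_minus_laplace_st_div[OF s])
  finally show ?thesis .
qed

lemma set_integral_laplace_st_comp_h:
  assumes s: "0 \<le> s"
  shows "set_integrable lborel {0<..} (\<lambda>u. laplace_st \<mu> (s * h u) - 1)"
    and "(\<integral>u\<in>{0<..}. (laplace_st \<mu> (s * h u) - 1) \<partial>lborel) = ln (laplace_st \<mu> s)"
proof -
  define g where "g u = indicator {0<..} u *\<^sub>R (1 - laplace_st \<mu> (s * h u))" for u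
  have "g \<in> borel_measurable borel"
    unfolding g_def by (rule W.borel_measurable_indicator_comp_h) measurable
  moreover have "AE u in lborel. 0 \<le> g u"
    using s by (auto simp: g_def indicator_def W.h_nonneg intro!: E.laplace_st_le_1)
  moreover have "(\<integral>\<^sup>+u. ennreal (g u) \<partial>lborel) = ennreal (- ln (laplace_st \<mu> s))"
    unfolding nn_integral_one_minus_laplace_st_comp_h[OF s, symmetric]
    by (intro nn_integral_cong) (simp add: g_def indicator_def)
  moreover have "0 \<le> - ln (laplace_st \<mu> s)"
    using E.laplace_st_pos[OF s] E.laplace_st_le_1[OF s] by simp
  ultimately have "integrable lborel g" and "integral\<^sup>L lborel g = - ln (laplace_st \<mu> s)"
    by (simp_all add: nn_integral_eq_integrable)
  moreover have "(\<lambda>u. indicator {0<..} u *\<^sub>R (laplace_st \<mu> (s * h u) - 1)) = (\<lambda>u. - g u)"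
    by (simp add: g_def fun_eq_iff algebra_simps)
  ultimately show "set_integrable lborel {0<..} (\<lambda>u. laplace_st \<mu> (s * h u) - 1)"
    and "(\<integral>u\<in>{0<..}. (laplace_st \<mu> (s * h u) - 1) \<partial>lborel) = ln (laplace_st \<mu> s)"
    by (simp_all add: set_integrable_def set_lebesgue_integral_def)
qed

lemma shot_noise_fixed_point: "shot_noise_fixed_point h 1 \<mu>"
proof -
  have "\<mu> \<noteq> return borel 0"
    using E.mean_pos by (auto simp: integral_return)
  then show ?thesis
    using in_Ph_plus set_integral_laplace_st_comp_h E.laplace_st_pos
    by (simp add: shot_noise_fixed_point_def)
qed

end

theorem proposition2p1:
  fixes \<rho> \<mu> :: "real measure" and h :: "real \<Rightarrow> real"
  assumes rho_prob: "prob_space \<rho>" and rho_sets: "sets \<rho> = sets borel"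
    and A_pos: "AE a in \<rho>. 0 < a"
    and Elog_neg: "(\<integral>\<^sup>+ a. ennreal (max 0 (ln a)) \<partial>\<rho>) < (\<integral>\<^sup>+ a. ennreal (max 0 (- ln a)) \<partial>\<rho>)"
    and mu_sol: "solves_eq2 \<rho> \<mu>"
    and h_nonneg: "\<And>u. 0 < u \<Longrightarrow> 0 \<le> h u"
    and h_mono: "\<And>u v. 0 < u \<Longrightarrow> u \<le> v \<Longrightarrow> h v \<le> h u"
    and h_rcont: "\<And>u. 0 < u \<Longrightarrow> continuous (at_right u) h"
    and h_rho: "\<And>B. B \<in> sets borel \<Longrightarrow> B \<subseteq> {0<..} \<Longrightarrow>
        (\<integral>\<^sup>+ u. ennreal (indicator B (h u) * h u) * indicator {0<..} u \<partial>lborel) = emeasure \<rho> B"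
  shows "(\<integral>\<^sup>+ z. ennreal (h z) * indicator {0<..} z \<partial>lborel) = 1
    \<and> (\<integral>\<^sup>+ z. ennreal (max 0 (h z * ln (h z))) * indicator {0<..} z \<partial>lborel)
           < (\<integral>\<^sup>+ z. ennreal (max 0 (- (h z * ln (h z)))) * indicator {0<..} z \<partial>lborel)
    \<and> shot_noise_fixed_point h 1 \<mu>"
proof -
  have "antimono_on {0<..} h"
    using h_mono by (auto intro: monotone_onI)
  then have "h \<in> borel_measurable (restrict_space borel {0<..})"
    by (rule borel_measurable_antimono_on)
  then have "weighted_pushforward \<rho> h"
    using rho_sets A_pos h_nonneg h_rho by (intro weighted_pushforward.intro)
  moreover have "eq2_solution \<rho> \<mu>"
    using rho_prob rho_sets A_pos mu_sol by (rule eq2_solution.intro)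
  ultimately interpret shot_noise_setting \<rho> \<mu> h
    by (rule shot_noise_setting.intro)
  have ennreal_max_0: "ennreal (max 0 x) = ennreal x" for x :: real
    by (simp add: max_def ennreal_neg)
  have "(\<integral>\<^sup>+z\<in>{0<..}. ennreal (h z) \<partial>lborel) = 1"
    by (simp add: W.nn_integral_h E.R.emeasure_space_1)
  moreover have "(\<integral>\<^sup>+z\<in>{0<..}. ennreal (max 0 (h z * ln (h z))) \<partial>lborel)
      = (\<integral>\<^sup>+a. ennreal (max 0 (ln a)) \<partial>\<rho>)"
    and "(\<integral>\<^sup>+z\<in>{0<..}. ennreal (max 0 (- (h z * ln (h z)))) \<partial>lborel)
      = (\<integral>\<^sup>+a. ennreal (max 0 (- ln a)) \<partial>\<rho>)"
    using W.nn_integral_h_mult_comp[of ln] W.nn_integral_h_mult_comp[of "\<lambda>a. - ln a"]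
    by (simp_all add: ennreal_max_0)
  ultimately show ?thesis
    using Elog_neg shot_noise_fixed_point by simp
qed

end
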